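(* Let $G$ be a regular graph and let $H$ be a graph that is not isomorphic to the edgeless graph $\overline{K_n}$ for any odd $n$. Then the lexicographic product $G\circ H$ is a balanced distance magic graph if and only if $H$ is a balanced distance magic graph.
   Context: All graphs are finite and simple. For a graph $G$ and vertex $x$, $N(x)=N_G(x)$ is the (open) neighborhood of $x$. A distance magic labeling of a graph $G$ of order $N$ is a bijection $\ell\colon V(G)\to\{1,\dots,N\}$ for which there is a constant $k$ such that the weight $w(x)=\sum_{y\in N(x)}\ell(y)$ equals $k$ for every $x\in V(G)$. A balanced distance magic labeling of a graph $G$ with an even number $N$ of vertices is a distance magic labeling $\ell$ such that for every $w\in V(G)$: whenever $u\in N(w)$ has $\ell(u)=i$, there is $v\in N(w)$ with $\ell(v)=N+1-i$. The vertices labeled $i$ and $N+1-i$ are called twins. $G$ is a balanced distance magic graph if it has an even number of vertices and admits a balanced distance magic labeling (in particular, an edgeless graph with an even number of vertices is balanced distance magic). The lexicographic product $G\circ H$ has vertex set $V(G)\times V(H)$, with $(g,h)$ adjacent to $(g',h')$ iff either $gg'\in E(G)$, or $g=g'$ and $hh'\in E(H)$. *)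

theory Defs
  imports Main
begin

definition graph :: "'a set \<Rightarrow> ('a \<Rightarrow> 'a \<Rightarrow> bool) \<Rightarrow> bool" where
  "graph V E \<longleftrightarrow> finite V \<and> V \<noteq> {} \<and>
     (\<forall>x y. E x y \<longrightarrow> x \<in> V \<and> y \<in> V) \<and>
     (\<forall>x y. E x y \<longrightarrow> E y x) \<and> (\<forall>x. \<not> E x x)"

definition nbhd :: "'a set \<Rightarrow> ('a \<Rightarrow> 'a \<Rightarrow> bool) \<Rightarrow> 'a \<Rightarrow> 'a set" where
  "nbhd V E x = {y \<in> V. E x y}"

definition regular :: "'a set \<Rightarrow> ('a \<Rightarrow> 'a \<Rightarrow> bool) \<Rightarrow> bool" where
  "regular V E \<longleftrightarrow> (\<exists>r. \<forall>x\<in>V. card (nbhd V E x) = r)"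

definition graph_iso :: "'a set \<Rightarrow> ('a \<Rightarrow> 'a \<Rightarrow> bool) \<Rightarrow> 'b set \<Rightarrow> ('b \<Rightarrow> 'b \<Rightarrow> bool) \<Rightarrow> bool" where
  "graph_iso V1 E1 V2 E2 \<longleftrightarrow>
     (\<exists>f. bij_betw f V1 V2 \<and> (\<forall>x\<in>V1. \<forall>y\<in>V1. E1 x y \<longleftrightarrow> E2 (f x) (f y)))"

definition edgeless_V :: "nat \<Rightarrow> nat set" where
  "edgeless_V n = {..<n}"

definition edgeless_E :: "nat \<Rightarrow> nat \<Rightarrow> bool" where
  "edgeless_E x y = False"

definition distance_magic_labeling :: "'a set \<Rightarrow> ('a \<Rightarrow> 'a \<Rightarrow> bool) \<Rightarrow> ('a \<Rightarrow> nat) \<Rightarrow> bool" where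
  "distance_magic_labeling V E l \<longleftrightarrow>
     bij_betw l V {1..card V} \<and> (\<exists>k. \<forall>x\<in>V. (\<Sum>y\<in>nbhd V E x. l y) = k)"

definition balanced_dm_labeling :: "'a set \<Rightarrow> ('a \<Rightarrow> 'a \<Rightarrow> bool) \<Rightarrow> ('a \<Rightarrow> nat) \<Rightarrow> bool" where
  "balanced_dm_labeling V E l \<longleftrightarrow> even (card V) \<and> distance_magic_labeling V E l \<and>
     (\<forall>w\<in>V. \<forall>u\<in>nbhd V E w. \<exists>v\<in>nbhd V E w. l v = card V + 1 - l u)"

definition balanced_distance_magic :: "'a set \<Rightarrow> ('a \<Rightarrow> 'a \<Rightarrow> bool) \<Rightarrow> bool" where
  "balanced_distance_magic V E \<longleftrightarrow> even (card V) \<and> (\<exists>l. balanced_dm_labeling V E l)"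

definition lex_V :: "'a set \<Rightarrow> 'b set \<Rightarrow> ('a \<times> 'b) set" where
  "lex_V VG VH = VG \<times> VH"

definition lex_E :: "('a \<Rightarrow> 'a \<Rightarrow> bool) \<Rightarrow> ('b \<Rightarrow> 'b \<Rightarrow> bool) \<Rightarrow> ('a \<times> 'b) \<Rightarrow> ('a \<times> 'b) \<Rightarrow> bool" where
  "lex_E EG EH p q \<longleftrightarrow> EG (fst p) (fst q) \<or> (fst p = fst q \<and> EH (snd p) (snd q))"

end

theory Submission
  imports Defs
begin

text \<open>In a balanced distance magic labelling the twin map, sending the vertex labelled i to
the one labelled N + 1 - i, is a fixpoint-free involution preserving every open neighbourhood,
and summing twins shows that a vertex of degree d has weight d (N + 1) / 2. Conversely, in a
regular graph such an involution yields a balanced labelling by giving each pair labels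
i and N + 1 - i. So a graph is balanced distance magic iff it is regular and every class of
vertices with equal open neighbourhoods has even size.

In G \<circ> H the degree of (g, h) is deg g |V(H)| + deg h, so for regular G the product is regular
iff H is. If H has no isolated vertex, (g, h) and (g', h') have equal neighbourhoods iff g = g'
and h, h' do, so the classes of G \<circ> H are copies of those of H. The remaining regular case is
H edgeless: then the classes are C \<times> V(H), and both sides hold because |V(H)| is even.\<close>

definition fixpoint_free_involution :: "'a set \<Rightarrow> ('a \<Rightarrow> 'a) \<Rightarrow> bool" where
  "fixpoint_free_involution S t \<longleftrightarrow> (\<forall>x\<in>S. t x \<in> S \<and> t x \<noteq> x \<and> t (t x) = x)"

lemma fixpoint_free_involution_Diff_pair:
  assumes "fixpoint_free_involution S t" "x \<in> S"
  shows "fixpoint_free_involution (S - {x, t x}) t"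
  unfolding fixpoint_free_involution_def
proof
  fix y assume y: "y \<in> S - {x, t x}"
  have "t y \<in> S" "t y \<noteq> y" "t (t y) = y" "t (t x) = x"
    using assms y unfolding fixpoint_free_involution_def by auto
  moreover from this(3,4) y have "t y \<noteq> x" "t y \<noteq> t x" by auto
  ultimately show "t y \<in> S - {x, t x} \<and> t y \<noteq> y \<and> t (t y) = y" by simp
qed

lemma card_Diff_orbit:
  assumes "finite S" "fixpoint_free_involution S t" "x \<in> S"
  shows "card (S - {x, t x}) + 2 = card S"
proof -
  have "{x, t x} \<subseteq> S" "card {x, t x} = 2"
    using assms(2,3) unfolding fixpoint_free_involution_def by auto
  moreover have "card {x, t x} \<le> card S" using assms(1) calculation(1) card_mono by blast
  ultimately show ?thesis using card_Diff_subset[of "{x, t x}" S] by simp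
qed

lemma even_card_if_fixpoint_free_involution:
  "finite S \<Longrightarrow> fixpoint_free_involution S t \<Longrightarrow> even (card S)"
proof (induction "card S" arbitrary: S rule: less_induct)
  case less
  show ?case
  proof (cases "S = {}")
    case False
    then obtain x where x: "x \<in> S" by blast
    have card: "card (S - {x, t x}) + 2 = card S" using card_Diff_orbit[OF less.prems x] .
    have "even (card (S - {x, t x}))"
      using less card fixpoint_free_involution_Diff_pair[OF less.prems(2) x] by simp
    with card show ?thesis by (metis even_add even_numeral)
  qed simp
qed

lemma fixpoint_free_involution_if_even_card:
  "finite S \<Longrightarrow> even (card S) \<Longrightarrow> \<exists>t. fixpoint_free_involution S t"
proof (induction "card S" arbitrary: S rule: less_induct)
  case less
  show ?case
  proof (cases "S = {}")
    case True
    then show ?thesis unfolding fixpoint_free_involution_def by blast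
  next
    case False
    then obtain x where x: "x \<in> S" by blast
    have "S \<noteq> {x}" using less.prems(2) by auto
    with x obtain y where y: "y \<in> S" "y \<noteq> x" by blast
    define S' where "S' = S - {x, y}"
    have card: "card S' + 2 = card S"
      using card_Diff_subset[of "{x, y}" S] card_mono[of S "{x, y}"] less.prems(1) x y
      unfolding S'_def by simp
    moreover have "finite S'" "even (card S')" using less.prems card unfolding S'_def by auto presburger
    ultimately obtain t' where t': "fixpoint_free_involution S' t'"
      using less.hyps[of S'] by auto
    have "fixpoint_free_involution S (t'(x := y, y := x))"
      using t' x y unfolding fixpoint_free_involution_def S'_def by auto
    then show ?thesis by blast
  qed
qed

lemma labeling_of_fixpoint_free_involution:
  "finite S \<Longrightarrow> fixpoint_free_involution S t \<Longrightarrow>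
    \<exists>l. bij_betw l S {1..card S} \<and> (\<forall>u\<in>S. l (t u) = card S + 1 - l u)"
proof (induction "card S" arbitrary: S rule: less_induct)
  case less
  show ?case
  proof (cases "S = {}")
    case True
    then show ?thesis by (simp add: bij_betw_def)
  next
    case False
    then obtain x where x: "x \<in> S" by blast
    define S' where "S' = S - {x, t x}"
    define N where "N = card S"
    have card: "card S' + 2 = N" using card_Diff_orbit[OF less.prems x] S'_def N_def by simp
    have inv': "fixpoint_free_involution S' t"
      using fixpoint_free_involution_Diff_pair[OF less.prems(2) x] S'_def by simp
    obtain l' where l': "bij_betw l' S' {1..card S'}" "\<forall>u\<in>S'. l' (t u) = card S' + 1 - l' u"
      using less.hyps[of S'] card less.prems inv' N_def S'_def by fastforce
    have tx: "t x \<in> S" "t x \<noteq> x" "t (t x) = x"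
      using less.prems(2) x unfolding fixpoint_free_involution_def by auto
    define l where "l y = (if y = x then 1 else if y = t x then N else Suc (l' y))" for y
    have "S = insert x (insert (t x) S')" using x tx unfolding S'_def by auto
    then have "l ` S = {1, N} \<union> Suc ` l' ` S'"
      using tx unfolding l_def S'_def by (auto simp: image_iff)
    also have "\<dots> = {1..N}"
      using l'(1) card by (auto simp: bij_betw_def image_iff)
    finally have img: "l ` S = {1..N}" .
    have "inj_on l S" by (rule eq_card_imp_inj_on) (simp_all add: less.prems(1) img N_def)
    with img have bij: "bij_betw l S {1..N}" unfolding bij_betw_def by simp
    have "l (t u) = N + 1 - l u" if u: "u \<in> S" for u
    proof (cases "u = x \<or> u = t x")
      case True
      then show ?thesis using tx card unfolding l_def by auto
    next
      case False
      with u have uS': "u \<in> S'" by (simp add: S'_def)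
      then have "t u \<in> S'" using inv' unfolding fixpoint_free_involution_def by simp
      moreover have "l' u \<in> {1..card S'}" using l'(1) uS' bij_betwE by blast
      ultimately show ?thesis using False l'(2) uS' card unfolding l_def S'_def by auto
    qed
    with bij show ?thesis unfolding N_def by blast
  qed
qed

lemma fixpoint_free_involution_of_labeling:
  fixes l :: "'a \<Rightarrow> nat"
  assumes bij: "bij_betw l V {1..N}" and "even N"
  obtains t where "fixpoint_free_involution V t" "\<And>u. u \<in> V \<Longrightarrow> l (t u) = N + 1 - l u"
proof -
  define t where "t u = inv_into V l (N + 1 - l u)" for u
  have inj: "inj_on l V" using bij by (simp add: bij_betw_def)
  have t: "t u \<in> V" "l (t u) = N + 1 - l u" if u: "u \<in> V" for u
  proof -
    have "l u \<in> {1..N}" using bij u bij_betwE by blast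
    then have "N + 1 - l u \<in> {1..N}" by auto
    then have "N + 1 - l u \<in> l ` V" using bij by (simp add: bij_betw_def)
    then show "t u \<in> V" "l (t u) = N + 1 - l u" unfolding t_def by (simp_all add: inv_into_into f_inv_into_f)
  qed
  have "t u \<noteq> u \<and> t (t u) = u" if u: "u \<in> V" for u
  proof -
    have lu: "l u \<in> {1..N}" using bij u bij_betwE by blast
    \<comment> \<open>a fixed point would need 2 * l u = N + 1, impossible for even N\<close>
    have "t u \<noteq> u" using t(2)[OF u] lu \<open>even N\<close> by auto presburger
    moreover have "l (t (t u)) = l u" using t[OF u] t(2)[OF t(1)[OF u]] lu by simp
    then have "t (t u) = u" using inj_onD[OF inj] t(1)[OF t(1)[OF u]] u by blast
    ultimately show ?thesis by simp
  qed
  with t have "fixpoint_free_involution V t" unfolding fixpoint_free_involution_def by blast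
  with t(2) show thesis using that by blast
qed

lemma sum_twin_labels:
  fixes l :: "'a \<Rightarrow> nat"
  assumes bij: "bij_betw l V {1..N}" and "S \<subseteq> V"
    and twin: "\<And>u. u \<in> S \<Longrightarrow> t u \<in> S \<and> t (t u) = u \<and> l (t u) = N + 1 - l u"
  shows "2 * sum l S = card S * (N + 1)"
proof -
  have "sum (\<lambda>u. l (t u)) S = sum l S"
    by (rule sum.reindex_bij_witness[where i = t and j = t]) (use twin in auto)
  then have "2 * sum l S = sum (\<lambda>u. l u + l (t u)) S" by (simp add: sum.distrib)
  also have "\<dots> = card S * (N + 1)"
  proof -
    have "l u \<in> {1..N}" if "u \<in> S" for u using bij_betwE[OF bij] \<open>S \<subseteq> V\<close> that by blast
    then have "l u + l (t u) = N + 1" if "u \<in> S" for u using twin that by fastforce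
    then show ?thesis by simp
  qed
  finally show ?thesis .
qed

lemma even_fibres_iff_fixpoint_free_involution:
  assumes "finite V"
  shows "(\<forall>x\<in>V. even (card {y \<in> V. f y = f x})) \<longleftrightarrow>
    (\<exists>t. fixpoint_free_involution V t \<and> (\<forall>u\<in>V. f (t u) = f u))"
proof
  assume even: "\<forall>x\<in>V. even (card {y \<in> V. f y = f x})"
  define fibre where "fibre x = {y \<in> V. f y = f x}" for x
  define pairing where "pairing x = (SOME s. fixpoint_free_involution (fibre x) s)" for x
  define t where "t x = pairing x x" for x
  have pairing: "fixpoint_free_involution (fibre x) (pairing x)" if "x \<in> V" for x
    unfolding pairing_def
  proof (rule someI_ex[of "fixpoint_free_involution (fibre x)"],
      rule fixpoint_free_involution_if_even_card)
    show "finite (fibre x)" using assms by (simp add: fibre_def)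
    show "even (card (fibre x))" using even that by (simp add: fibre_def)
  qed
  have "t x \<in> fibre x \<and> t x \<noteq> x \<and> t (t x) = x" if x: "x \<in> V" for x
  proof -
    have "x \<in> fibre x" using x by (simp add: fibre_def)
    then have tx: "t x \<in> fibre x" "t x \<noteq> x" "pairing x (t x) = x"
      using pairing[OF x] unfolding fixpoint_free_involution_def t_def by auto
    moreover have "pairing (t x) = pairing x"
      using tx(1) unfolding pairing_def fibre_def by auto
    ultimately show ?thesis unfolding t_def by simp
  qed
  then show "\<exists>t. fixpoint_free_involution V t \<and> (\<forall>u\<in>V. f (t u) = f u)"
    unfolding fixpoint_free_involution_def fibre_def by blast
next
  assume "\<exists>t. fixpoint_free_involution V t \<and> (\<forall>u\<in>V. f (t u) = f u)"
  then obtain t where "fixpoint_free_involution V t" "\<forall>u\<in>V. f (t u) = f u" by blast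
  then have "fixpoint_free_involution {y \<in> V. f y = f x} t" for x
    unfolding fixpoint_free_involution_def by auto
  moreover have "finite {y \<in> V. f y = f x}" for x using assms by simp
  ultimately show "\<forall>x\<in>V. even (card {y \<in> V. f y = f x})"
    using even_card_if_fixpoint_free_involution by blast
qed

definition nbhd_class :: "'a set \<Rightarrow> ('a \<Rightarrow> 'a \<Rightarrow> bool) \<Rightarrow> 'a \<Rightarrow> 'a set" where
  "nbhd_class V E x = {y \<in> V. nbhd V E y = nbhd V E x}"

lemma nbhd_closed_iff_nbhd_preserving:
  assumes sym: "\<And>x y. x \<in> V \<Longrightarrow> y \<in> V \<Longrightarrow> E x y \<Longrightarrow> E y x"
    and t: "\<And>u. u \<in> V \<Longrightarrow> t u \<in> V \<and> t (t u) = u"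
  shows "(\<forall>w\<in>V. \<forall>u\<in>nbhd V E w. t u \<in> nbhd V E w) \<longleftrightarrow> (\<forall>u\<in>V. nbhd V E (t u) = nbhd V E u)"
proof
  assume closed: "\<forall>w\<in>V. \<forall>u\<in>nbhd V E w. t u \<in> nbhd V E w"
  have "nbhd V E (t u) \<subseteq> nbhd V E u" if "u \<in> V" for u
    using closed sym t[OF that] unfolding nbhd_def by fastforce
  then show "\<forall>u\<in>V. nbhd V E (t u) = nbhd V E u" using t by (metis subset_antisym)
next
  assume preserving: "\<forall>u\<in>V. nbhd V E (t u) = nbhd V E u"
  show "\<forall>w\<in>V. \<forall>u\<in>nbhd V E w. t u \<in> nbhd V E w"
  proof (intro ballI)
    fix w u assume "w \<in> V" "u \<in> nbhd V E w"
    then have "u \<in> V" "w \<in> nbhd V E u" using sym unfolding nbhd_def by auto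
    then have "w \<in> nbhd V E (t u)" using preserving by simp
    then show "t u \<in> nbhd V E w" using sym t \<open>u \<in> V\<close> \<open>w \<in> V\<close> unfolding nbhd_def by auto
  qed
qed

lemma regular_nbhd_preserving_involution_if_balanced_distance_magic:
  assumes sym: "\<And>x y. x \<in> V \<Longrightarrow> y \<in> V \<Longrightarrow> E x y \<Longrightarrow> E y x"
    and "balanced_distance_magic V E"
  shows "regular V E \<and>
    (\<exists>t. fixpoint_free_involution V t \<and> (\<forall>u\<in>V. nbhd V E (t u) = nbhd V E u))"
proof -
  obtain l k where even: "even (card V)" and bij: "bij_betw l V {1..card V}"
    and weight: "\<forall>x\<in>V. (\<Sum>y\<in>nbhd V E x. l y) = k"
    and balanced: "\<forall>w\<in>V. \<forall>u\<in>nbhd V E w. \<exists>v\<in>nbhd V E w. l v = card V + 1 - l u"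
    using assms(2) unfolding balanced_distance_magic_def balanced_dm_labeling_def
      distance_magic_labeling_def by blast
  obtain t where t: "fixpoint_free_involution V t" "\<And>u. u \<in> V \<Longrightarrow> l (t u) = card V + 1 - l u"
    using fixpoint_free_involution_of_labeling[OF bij even] by blast
  have tV: "t u \<in> V \<and> t (t u) = u" if "u \<in> V" for u
    using t(1) that unfolding fixpoint_free_involution_def by blast
  have closed: "\<forall>w\<in>V. \<forall>u\<in>nbhd V E w. t u \<in> nbhd V E w"
  proof (intro ballI)
    fix w u assume "w \<in> V" "u \<in> nbhd V E w"
    with balanced obtain v where v: "v \<in> nbhd V E w" "l v = card V + 1 - l u" by blast
    \<comment> \<open>the twin demanded by balancedness is t u, as l is injective\<close>
    moreover have "u \<in> V" "v \<in> V" using \<open>u \<in> nbhd V E w\<close> v(1) unfolding nbhd_def by auto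
    then have "v = t u"
      using inj_onD[OF bij_betw_imp_inj_on[OF bij]] t(2) tV v(2) by metis
    ultimately show "t u \<in> nbhd V E w" by simp
  qed
  have "card (nbhd V E w) = 2 * k div (card V + 1)" if "w \<in> V" for w
  proof -
    have "2 * k = card (nbhd V E w) * (card V + 1)"
      using sum_twin_labels[OF bij, of "nbhd V E w" t] closed tV t(2) weight that
      unfolding nbhd_def by auto
    then show ?thesis by (simp only: div_mult_self_is_m zero_less_Suc Suc_eq_plus1[symmetric])
  qed
  then have "regular V E" unfolding regular_def by blast
  with closed show ?thesis using nbhd_closed_iff_nbhd_preserving[of V E t, OF sym tV] t(1) by blast
qed

lemma balanced_distance_magic_if_regular_nbhd_preserving_involution:
  assumes fin: "finite V" and sym: "\<And>x y. x \<in> V \<Longrightarrow> y \<in> V \<Longrightarrow> E x y \<Longrightarrow> E y x"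
    and "regular V E" and t: "fixpoint_free_involution V t"
    and preserving: "\<forall>u\<in>V. nbhd V E (t u) = nbhd V E u"
  shows "balanced_distance_magic V E"
proof -
  obtain d where d: "\<forall>x\<in>V. card (nbhd V E x) = d" using \<open>regular V E\<close> unfolding regular_def by blast
  have tV: "t u \<in> V \<and> t (t u) = u" if "u \<in> V" for u
    using t that unfolding fixpoint_free_involution_def by blast
  have closed: "\<forall>w\<in>V. \<forall>u\<in>nbhd V E w. t u \<in> nbhd V E w"
    using nbhd_closed_iff_nbhd_preserving[of V E t, OF sym tV] preserving by blast
  obtain l where bij: "bij_betw l V {1..card V}" and l: "\<forall>u\<in>V. l (t u) = card V + 1 - l u"
    using labeling_of_fixpoint_free_involution[OF fin t] by blast
  have "(\<Sum>y\<in>nbhd V E w. l y) = d * (card V + 1) div 2" if "w \<in> V" for w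
  proof -
    have "2 * (\<Sum>y\<in>nbhd V E w. l y) = d * (card V + 1)"
      using sum_twin_labels[OF bij, of "nbhd V E w" t] closed tV l d that unfolding nbhd_def by auto
    then show ?thesis by simp
  qed
  moreover have "\<forall>w\<in>V. \<forall>u\<in>nbhd V E w. \<exists>v\<in>nbhd V E w. l v = card V + 1 - l u"
    using closed l unfolding nbhd_def by blast
  moreover have "even (card V)" using even_card_if_fixpoint_free_involution[OF fin t] .
  ultimately show ?thesis
    using bij unfolding balanced_distance_magic_def balanced_dm_labeling_def
      distance_magic_labeling_def by blast
qed

lemma balanced_distance_magic_iff_even_nbhd_classes:
  assumes "finite V" and "\<And>x y. x \<in> V \<Longrightarrow> y \<in> V \<Longrightarrow> E x y \<Longrightarrow> E y x"
  shows "balanced_distance_magic V E \<longleftrightarrow> regular V E \<and> (\<forall>x\<in>V. even (card (nbhd_class V E x)))"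
  unfolding nbhd_class_def even_fibres_iff_fixpoint_free_involution[OF assms(1)]
  using regular_nbhd_preserving_involution_if_balanced_distance_magic[of V E]
    balanced_distance_magic_if_regular_nbhd_preserving_involution[of V E] assms
  by blast

lemma nbhd_lex:
  assumes "graph VG EG" "graph VH EH" "g \<in> VG"
  shows "nbhd (lex_V VG VH) (lex_E EG EH) (g, h) = nbhd VG EG g \<times> VH \<union> {g} \<times> nbhd VH EH h"
  using assms unfolding graph_def lex_V_def lex_E_def nbhd_def by auto

lemma card_nbhd_lex:
  assumes G: "graph VG EG" and H: "graph VH EH" and g: "g \<in> VG"
  shows "card (nbhd (lex_V VG VH) (lex_E EG EH) (g, h)) =
    card (nbhd VG EG g) * card VH + card (nbhd VH EH h)"
proof -
  have "finite (nbhd VG EG g)" "finite VH" "finite (nbhd VH EH h)"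
    using G H unfolding graph_def nbhd_def by auto
  moreover have "(nbhd VG EG g \<times> VH) \<inter> ({g} \<times> nbhd VH EH h) = {}"
    using G unfolding graph_def nbhd_def by auto
  ultimately show ?thesis
    unfolding nbhd_lex[OF G H g] by (simp add: card_Un_disjoint card_cartesian_product)
qed

lemma regular_lex_iff:
  assumes G: "graph VG EG" and H: "graph VH EH" and "regular VG EG"
  shows "regular (lex_V VG VH) (lex_E EG EH) \<longleftrightarrow> regular VH EH"
proof -
  obtain r where r: "\<forall>x\<in>VG. card (nbhd VG EG x) = r" using \<open>regular VG EG\<close> unfolding regular_def by blast
  obtain g0 where g0: "g0 \<in> VG" using G unfolding graph_def by blast
  have deg: "card (nbhd (lex_V VG VH) (lex_E EG EH) (g, h)) = r * card VH + card (nbhd VH EH h)"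
    if "g \<in> VG" for g h
    using card_nbhd_lex[OF G H that] r that by simp
  show ?thesis
  proof
    assume "regular (lex_V VG VH) (lex_E EG EH)"
    then obtain R where "\<forall>p\<in>lex_V VG VH. card (nbhd (lex_V VG VH) (lex_E EG EH) p) = R"
      unfolding regular_def by blast
    then have "card (nbhd VH EH h) = R - r * card VH" if "h \<in> VH" for h
      using deg[OF g0, of h] g0 that unfolding lex_V_def by fastforce
    then show "regular VH EH" unfolding regular_def by blast
  next
    assume "regular VH EH"
    then obtain s where "\<forall>x\<in>VH. card (nbhd VH EH x) = s" unfolding regular_def by blast
    then have "card (nbhd (lex_V VG VH) (lex_E EG EH) p) = r * card VH + s"
      if "p \<in> lex_V VG VH" for p
      using deg that unfolding lex_V_def by auto
    then show "regular (lex_V VG VH) (lex_E EG EH)" unfolding regular_def by blast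
  qed
qed

lemma nbhd_lex_eq_iff:
  assumes G: "graph VG EG" and H: "graph VH EH" and g: "g \<in> VG" and g': "g' \<in> VG"
    and h: "h \<in> VH" and ne: "nbhd VH EH h \<noteq> {}"
  shows "nbhd (lex_V VG VH) (lex_E EG EH) (g', h') = nbhd (lex_V VG VH) (lex_E EG EH) (g, h)
    \<longleftrightarrow> g' = g \<and> nbhd VH EH h' = nbhd VH EH h"
proof
  assume "nbhd (lex_V VG VH) (lex_E EG EH) (g', h') = nbhd (lex_V VG VH) (lex_E EG EH) (g, h)"
  then have eq: "nbhd VG EG g' \<times> VH \<union> {g'} \<times> nbhd VH EH h' = nbhd VG EG g \<times> VH \<union> {g} \<times> nbhd VH EH h"
    unfolding nbhd_lex[OF G H g] nbhd_lex[OF G H g'] .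
  have no_loops: "g \<notin> nbhd VG EG g" "h \<notin> nbhd VH EH h"
    using G H unfolding graph_def nbhd_def by auto
  \<comment> \<open>for g' \<noteq> g, a neighbour (g, x) of (g, h) forces g \<in> N(g'), making (g, h) its own neighbour\<close>
  have "g' = g"
  proof (rule ccontr)
    assume "g' \<noteq> g"
    obtain x where "x \<in> nbhd VH EH h" using ne by blast
    with eq \<open>g' \<noteq> g\<close> have "g \<in> nbhd VG EG g'" by blast
    with eq h have "(g, h) \<in> nbhd VG EG g \<times> VH \<union> {g} \<times> nbhd VH EH h" by blast
    with no_loops show False by blast
  qed
  moreover from this eq no_loops(1) have "nbhd VH EH h' = nbhd VH EH h" by blast
  ultimately show "g' = g \<and> nbhd VH EH h' = nbhd VH EH h" ..
next
  assume "g' = g \<and> nbhd VH EH h' = nbhd VH EH h"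
  then show "nbhd (lex_V VG VH) (lex_E EG EH) (g', h') = nbhd (lex_V VG VH) (lex_E EG EH) (g, h)"
    using nbhd_lex[OF G H g] nbhd_lex[OF G H g'] by simp
qed

lemma nbhd_class_lex:
  assumes G: "graph VG EG" and H: "graph VH EH" and g: "g \<in> VG"
    and h: "h \<in> VH" and ne: "nbhd VH EH h \<noteq> {}"
  shows "nbhd_class (lex_V VG VH) (lex_E EG EH) (g, h) = {g} \<times> nbhd_class VH EH h"
  using nbhd_lex_eq_iff[OF G H g _ h ne] g unfolding nbhd_class_def lex_V_def by auto

lemma nbhd_class_lex_edgeless:
  assumes G: "graph VG EG" and H: "graph VH EH" and g: "g \<in> VG" and h: "h \<in> VH"
    and edgeless: "\<forall>h\<in>VH. nbhd VH EH h = {}"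
  shows "nbhd_class (lex_V VG VH) (lex_E EG EH) (g, h) = nbhd_class VG EG g \<times> VH"
proof -
  have nbhd: "nbhd (lex_V VG VH) (lex_E EG EH) (x, y) = nbhd VG EG x \<times> VH" if "x \<in> VG" "y \<in> VH" for x y
    using nbhd_lex[OF G H that(1)] edgeless that(2) by simp
  have "VH \<noteq> {}" using H unfolding graph_def by blast
  then have "nbhd VG EG x \<times> VH = nbhd VG EG g \<times> VH \<longleftrightarrow> nbhd VG EG x = nbhd VG EG g" for x
    by (auto simp add: times_eq_iff)
  then show ?thesis using nbhd g h unfolding nbhd_class_def lex_V_def by auto
qed

lemma even_nbhd_classes_lex_iff:
  assumes G: "graph VG EG" and H: "graph VH EH" and ne: "\<forall>h\<in>VH. nbhd VH EH h \<noteq> {}"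
  shows "(\<forall>p\<in>lex_V VG VH. even (card (nbhd_class (lex_V VG VH) (lex_E EG EH) p))) \<longleftrightarrow>
    (\<forall>h\<in>VH. even (card (nbhd_class VH EH h)))"
proof -
  obtain g0 where "g0 \<in> VG" using G unfolding graph_def by blast
  moreover have "card (nbhd_class (lex_V VG VH) (lex_E EG EH) (g, h)) = card (nbhd_class VH EH h)"
    if "g \<in> VG" "h \<in> VH" for g h
    using nbhd_class_lex[OF G H that ne[rule_format, OF that(2)]] by (simp add: card_cartesian_product)
  ultimately show ?thesis unfolding lex_V_def by auto
qed

lemma even_nbhd_classes_lex_edgeless:
  assumes G: "graph VG EG" and H: "graph VH EH"
    and edgeless: "\<forall>h\<in>VH. nbhd VH EH h = {}" and even: "even (card VH)"
  shows "\<forall>p\<in>lex_V VG VH. even (card (nbhd_class (lex_V VG VH) (lex_E EG EH) p))"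
    and "\<forall>h\<in>VH. even (card (nbhd_class VH EH h))"
proof -
  show "\<forall>p\<in>lex_V VG VH. even (card (nbhd_class (lex_V VG VH) (lex_E EG EH) p))"
    using nbhd_class_lex_edgeless[OF G H _ _ edgeless] even
    unfolding lex_V_def by (auto simp: card_cartesian_product)
  have "nbhd_class VH EH h = VH" if "h \<in> VH" for h
    using edgeless that unfolding nbhd_class_def by auto
  then show "\<forall>h\<in>VH. even (card (nbhd_class VH EH h))" using even by simp
qed

lemma graph_iso_edgeless:
  assumes "graph V E" and "\<forall>x\<in>V. nbhd V E x = {}"
  shows "graph_iso V E (edgeless_V (card V)) edgeless_E"
proof -
  have "finite V" using assms(1) unfolding graph_def by blast
  then obtain f where "bij_betw f V {..<card V}"
    using ex_bij_betw_finite_nat[of V] atLeast0LessThan by auto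
  moreover have "\<not> E x y" if "x \<in> V" "y \<in> V" for x y
    using assms(2) that unfolding nbhd_def by auto
  ultimately show ?thesis unfolding graph_iso_def edgeless_V_def edgeless_E_def by blast
qed

lemma regular_nbhd_nonempty:
  assumes "finite V" "regular V E" "x \<in> V" "nbhd V E x \<noteq> {}"
  shows "\<forall>y\<in>V. nbhd V E y \<noteq> {}"
proof -
  obtain d where d: "\<forall>y\<in>V. card (nbhd V E y) = d" using assms(2) unfolding regular_def by blast
  have "finite (nbhd V E y)" for y using assms(1) unfolding nbhd_def by simp
  then have "d \<noteq> 0" using d assms(3,4) by auto
  then show ?thesis using d by fastforce
qed

theorem mainTheorem3:
  fixes VG :: "'a set" and EG :: "'a \<Rightarrow> 'a \<Rightarrow> bool"
    and VH :: "'b set" and EH :: "'b \<Rightarrow> 'b \<Rightarrow> bool"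
  assumes "graph VG EG" and "graph VH EH"
    and "regular VG EG"
    and "\<forall>n. odd n \<longrightarrow> \<not> graph_iso VH EH (edgeless_V n) edgeless_E"
  shows "balanced_distance_magic (lex_V VG VH) (lex_E EG EH) \<longleftrightarrow>
         balanced_distance_magic VH EH"
proof -
  note G = assms(1) and H = assms(2)
  have "balanced_distance_magic (lex_V VG VH) (lex_E EG EH) \<longleftrightarrow> regular (lex_V VG VH) (lex_E EG EH) \<and>
      (\<forall>p\<in>lex_V VG VH. even (card (nbhd_class (lex_V VG VH) (lex_E EG EH) p)))"
    by (rule balanced_distance_magic_iff_even_nbhd_classes)
      (use G H in \<open>auto simp: graph_def lex_V_def lex_E_def\<close>)
  moreover have "balanced_distance_magic VH EH \<longleftrightarrow>
      regular VH EH \<and> (\<forall>h\<in>VH. even (card (nbhd_class VH EH h)))"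
    by (rule balanced_distance_magic_iff_even_nbhd_classes) (use H in \<open>auto simp: graph_def\<close>)
  moreover have "(\<forall>p\<in>lex_V VG VH. even (card (nbhd_class (lex_V VG VH) (lex_E EG EH) p))) \<longleftrightarrow>
      (\<forall>h\<in>VH. even (card (nbhd_class VH EH h)))" if "regular VH EH"
  proof (cases "\<forall>h\<in>VH. nbhd VH EH h = {}")
    case True
    then have "even (card VH)" using graph_iso_edgeless[OF H] assms(4) by blast
    with True show ?thesis using even_nbhd_classes_lex_edgeless[OF G H] by blast
  next
    case False
    then have "\<forall>h\<in>VH. nbhd VH EH h \<noteq> {}"
      using regular_nbhd_nonempty[OF _ that] H unfolding graph_def by blast
    then show ?thesis by (rule even_nbhd_classes_lex_iff[OF G H])
  qed
  ultimately show ?thesis using regular_lex_iff[OF G H assms(3)] by blast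
qed

end
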